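(* Let $X\subset\mathbb{R}^n$ be a nonempty closed convex set with $X$ unbounded, and let $f(x)=c^Tx+\beta$ with $c\in\mathbb{R}^n$, $\beta\in\mathbb{R}$, be bounded from below on $X$. If $X^\infty\cap\mathcal{K}(f)=\{0\}$, then $0\notin\partial f(\infty)+N(\infty;X)$. (Hence for such $f$ and $X$ the two conditions are equivalent.)
   Context: $X^\infty=\{u:\exists t_k\to+\infty,\ \exists x_k\in X,\ x_k/t_k\to u\}$; $f^\infty(d)=\inf\{\liminf_{k} f(t_kd_k)/t_k:\ t_k\to+\infty,\ d_k\to d\}$; $\mathcal{K}(f)=\{d: f^\infty(d)\le 0\}$. $N(\infty;X)$ is the set of $u$ for which there exist $x_k\in X$, $u_k\in\widehat N(x_k;X)$ with $\|x_k\|\to\infty$ and $u_k\to u$, where $\widehat N(x;X)=\{v:\limsup_{z\to x,\,z\in X}\langle v,z-x\rangle/\|z-x\|\le 0\}$. $\partial f(\infty)$ is the set of $u$ for which there exist $x_k\in\mathbb{R}^n$ and $(u_k,v_k)\in N((x_k,f(x_k));\operatorname{epi}f)$ (limiting normal cone) with $\|x_k\|\to\infty$ and $(u_k,v_k)\to(u,-1)$. *)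

theory Defs
  imports "HOL-Analysis.Analysis"
begin

definition asymptotic_cone :: "'a::real_normed_vector set \<Rightarrow> 'a set" where
  "asymptotic_cone X = {u. \<exists>t x. filterlim t at_top sequentially \<and> (\<forall>k. x k \<in> X) \<and>
      ((\<lambda>k. x k /\<^sub>R t k) \<longlonglongrightarrow> u)}"

definition asymptotic_fun :: "('a::real_normed_vector \<Rightarrow> real) \<Rightarrow> 'a \<Rightarrow> ereal" where
  "asymptotic_fun f d = Inf {Liminf sequentially (\<lambda>k. ereal (f (t k *\<^sub>R dd k) / t k)) | t dd.
      filterlim t at_top sequentially \<and> (dd \<longlonglongrightarrow> d)}"

definition Kf :: "('a::real_normed_vector \<Rightarrow> real) \<Rightarrow> 'a set" where
  "Kf f = {d. asymptotic_fun f d \<le> 0}"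

definition regular_normal :: "'a::real_inner set \<Rightarrow> 'a \<Rightarrow> 'a set" where
  "regular_normal X x = {v. Limsup (at x within X) (\<lambda>z. ereal (inner v (z - x) / norm (z - x))) \<le> 0}"

definition limiting_normal :: "'a::real_inner set \<Rightarrow> 'a \<Rightarrow> 'a set" where
  "limiting_normal X x = {v. \<exists>xs vs. (\<forall>k. xs k \<in> X \<and> vs k \<in> regular_normal X (xs k)) \<and>
      (xs \<longlonglongrightarrow> x) \<and> (vs \<longlonglongrightarrow> v)}"

definition epigraph :: "('a \<Rightarrow> real) \<Rightarrow> ('a \<times> real) set" where
  "epigraph f = {(x, r). f x \<le> r}"

definition normal_infty :: "'a::real_inner set \<Rightarrow> 'a set" where
  "normal_infty X = {u. \<exists>xs us. (\<forall>k. xs k \<in> X \<and> us k \<in> regular_normal X (xs k)) \<and>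
      filterlim (\<lambda>k. norm (xs k)) at_top sequentially \<and> (us \<longlonglongrightarrow> u)}"

definition subdiff_infty :: "('a::real_inner \<Rightarrow> real) \<Rightarrow> 'a set" where
  "subdiff_infty f = {u. \<exists>xs us vs.
      (\<forall>k. (us k, vs k) \<in> limiting_normal (epigraph f) (xs k, f (xs k))) \<and>
      filterlim (\<lambda>k. norm (xs k)) at_top sequentially \<and>
      (us \<longlonglongrightarrow> u) \<and> (vs \<longlonglongrightarrow> -1)}"

end

theory Submission
  imports Defs
begin

text \<open>
  Every regular normal to the epigraph of the affine function \<open>f x = c \<bullet> x + \<beta>\<close> is a multiple
  of \<open>(c, -1)\<close>, hence so is every limiting normal, and \<open>\<partial>f(\<infinity>) \<subseteq> {c}\<close>. Therefore
  \<open>0 \<in> \<partial>f(\<infinity>) + N(\<infinity>;X)\<close> forces \<open>-c \<in> N(\<infinity>;X)\<close>: there are normals \<open>u\<^sub>k \<rightarrow> -c\<close> at points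
  \<open>x\<^sub>k \<in> X\<close> with \<open>|x\<^sub>k| \<rightarrow> \<infinity>\<close>. By convexity \<open>u\<^sub>k \<bullet> z \<le> u\<^sub>k \<bullet> x\<^sub>k\<close> for a fixed \<open>z \<in> X\<close>; dividing by
  \<open>|x\<^sub>k|\<close> and passing to a subsequence gives a unit direction \<open>d \<in> X\<^sup>\<infinity>\<close> with \<open>c \<bullet> d \<le> 0\<close>, so
  \<open>f\<^sup>\<infinity>(d) \<le> c \<bullet> d \<le> 0\<close> and \<open>d \<in> X\<^sup>\<infinity> \<inter> \<K>(f) - {0}\<close>.
\<close>

lemma regular_normal_inner_nonpos:
  fixes S :: "'a::real_inner set"
  assumes normal: "w \<in> regular_normal S x" and feasible: "\<And>t. 0 < t \<Longrightarrow> t \<le> 1 \<Longrightarrow> x + t *\<^sub>R v \<in> S"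
  shows "w \<bullet> v \<le> 0"
proof (rule ccontr)
  assume "\<not> w \<bullet> v \<le> 0"
  then have "v \<noteq> 0" by auto
  define C where "C = w \<bullet> v / norm v"
  have C_pos: "C > 0" using \<open>\<not> w \<bullet> v \<le> 0\<close> \<open>v \<noteq> 0\<close> by (simp add: C_def)
  define y where "y = (\<lambda>j. x + inverse (real (Suc j)) *\<^sub>R v)"
  have "y \<longlonglongrightarrow> x + 0 *\<^sub>R v"
    unfolding y_def by (intro tendsto_intros LIMSEQ_inverse_real_of_nat)
  with feasible \<open>v \<noteq> 0\<close> have y_to_x: "filterlim y (at x within S) sequentially"
    by (auto simp: filterlim_at y_def field_simps)
  have "\<forall>e>0. eventually (\<lambda>z. e > ereal (w \<bullet> (z - x) / norm (z - x))) (at x within S)"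
    using normal by (simp add: regular_normal_def Limsup_le_iff)
  then have "eventually (\<lambda>z. w \<bullet> (z - x) / norm (z - x) < C / 2) (at x within S)"
    using C_pos by (auto dest: spec[of _ "ereal (C / 2)"])
  from eventually_compose_filterlim[OF this y_to_x]
  have "eventually (\<lambda>j. C < C / 2) sequentially"
    using \<open>v \<noteq> 0\<close> by (simp add: y_def C_def)
  then show False
    using C_pos by simp
qed

corollary regular_normal_convex_inner_nonpos:
  fixes S :: "'a::real_inner set"
  assumes "convex S" "x \<in> S" "z \<in> S" "w \<in> regular_normal S x"
  shows "w \<bullet> (z - x) \<le> 0"
proof (rule regular_normal_inner_nonpos[OF assms(4)])
  fix t :: real assume "0 < t" "t \<le> 1"
  then have "(1 - t) *\<^sub>R x + t *\<^sub>R z \<in> S"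
    using assms(1-3) by (intro convexD_alt) auto
  then show "x + t *\<^sub>R (z - x) \<in> S"
    by (simp add: algebra_simps)
qed

lemma regular_normal_epigraph_affine:
  fixes c :: "'a::real_inner"
  assumes "p \<in> epigraph (\<lambda>x. c \<bullet> x + \<beta>)"
    and "(a, b) \<in> regular_normal (epigraph (\<lambda>x. c \<bullet> x + \<beta>)) p"
  shows "a = - b *\<^sub>R c"
proof -
  have "(a, b) \<bullet> (e, c \<bullet> e) \<le> 0" for e
  proof (rule regular_normal_inner_nonpos[OF assms(2)])
    fix t :: real
    show "p + t *\<^sub>R (e, c \<bullet> e) \<in> epigraph (\<lambda>x. c \<bullet> x + \<beta>)"
      using assms(1) by (cases p) (simp add: epigraph_def inner_add_right)
  qed
  from this[of "a + b *\<^sub>R c"] this[of "- (a + b *\<^sub>R c)"]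
  have "(a + b *\<^sub>R c) \<bullet> (a + b *\<^sub>R c) = 0"
    by (simp add: inner_commute algebra_simps)
  then show ?thesis
    by (simp add: eq_neg_iff_add_eq_0)
qed

lemma limiting_normal_epigraph_affine:
  fixes c :: "'a::real_inner"
  assumes "(u, v) \<in> limiting_normal (epigraph (\<lambda>x. c \<bullet> x + \<beta>)) q"
  shows "u = - v *\<^sub>R c"
proof -
  obtain ps ws where
    normals: "\<And>k. ps k \<in> epigraph (\<lambda>x. c \<bullet> x + \<beta>) \<and> ws k \<in> regular_normal (epigraph (\<lambda>x. c \<bullet> x + \<beta>)) (ps k)"
    and "ws \<longlonglongrightarrow> (u, v)"
    using assms unfolding limiting_normal_def by blast
  have "(\<lambda>k. fst (ws k) + snd (ws k) *\<^sub>R c) \<longlonglongrightarrow> u + v *\<^sub>R c"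
    using tendsto_fst[OF \<open>ws \<longlonglongrightarrow> (u, v)\<close>] tendsto_snd[OF \<open>ws \<longlonglongrightarrow> (u, v)\<close>]
    by (intro tendsto_intros) simp_all
  moreover have "fst (ws k) + snd (ws k) *\<^sub>R c = 0" for k
    using regular_normal_epigraph_affine[of "ps k" c \<beta> "fst (ws k)" "snd (ws k)"] normals[of k]
    by simp
  ultimately have "u + v *\<^sub>R c = 0"
    by (simp add: LIMSEQ_const_iff)
  then show ?thesis
    by (simp add: eq_neg_iff_add_eq_0)
qed

lemma subdiff_infty_affine:
  fixes c :: "'a::real_inner"
  shows "subdiff_infty (\<lambda>x. c \<bullet> x + \<beta>) \<subseteq> {c}"
proof
  fix u assume "u \<in> subdiff_infty (\<lambda>x. c \<bullet> x + \<beta>)"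
  then obtain xs us vs where
    "\<And>k. (us k, vs k) \<in> limiting_normal (epigraph (\<lambda>x. c \<bullet> x + \<beta>)) (xs k, c \<bullet> xs k + \<beta>)"
    and "us \<longlonglongrightarrow> u" "vs \<longlonglongrightarrow> -1"
    unfolding subdiff_infty_def by blast
  then have "us = (\<lambda>k. - vs k *\<^sub>R c)"
    using limiting_normal_epigraph_affine by blast
  moreover have "(\<lambda>k. - vs k *\<^sub>R c) \<longlonglongrightarrow> c"
    using tendsto_scaleR[OF tendsto_minus[OF \<open>vs \<longlonglongrightarrow> -1\<close>] tendsto_const[of c]] by simp
  ultimately show "u \<in> {c}"
    using \<open>us \<longlonglongrightarrow> u\<close> LIMSEQ_unique by auto
qed

lemma asymptotic_fun_affine_le:
  fixes c :: "'a::real_inner"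
  shows "asymptotic_fun (\<lambda>x. c \<bullet> x + \<beta>) d \<le> ereal (c \<bullet> d)"
proof -
  define t where "t = (\<lambda>k. real (Suc k))"
  have t_to_infty: "filterlim t at_top sequentially"
    unfolding t_def by (rule filterlim_compose[OF filterlim_real_sequentially filterlim_Suc])
  have "(c \<bullet> (t k *\<^sub>R d) + \<beta>) / t k = c \<bullet> d + \<beta> * inverse (real (Suc k))" for k
    unfolding t_def by (simp add: field_simps del: of_nat_Suc)
  moreover have "(\<lambda>k. c \<bullet> d + \<beta> * inverse (real (Suc k))) \<longlonglongrightarrow> c \<bullet> d + \<beta> * 0"
    by (intro tendsto_intros LIMSEQ_inverse_real_of_nat)
  ultimately have quotient_limit: "(\<lambda>k. ereal ((c \<bullet> (t k *\<^sub>R d) + \<beta>) / t k)) \<longlonglongrightarrow> ereal (c \<bullet> d)"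
    by simp
  have "asymptotic_fun (\<lambda>x. c \<bullet> x + \<beta>) d \<le> Liminf sequentially (\<lambda>k. ereal ((c \<bullet> (t k *\<^sub>R d) + \<beta>) / t k))"
    unfolding asymptotic_fun_def
    by (rule Inf_lower) (use t_to_infty in \<open>intro CollectI exI[of _ t] exI[of _ "\<lambda>_. d"], simp\<close>)
  also have "\<dots> = ereal (c \<bullet> d)"
    using quotient_limit by (simp add: lim_imp_Liminf)
  finally show ?thesis .
qed

lemma unbounded_sequence_direction:
  fixes xs :: "nat \<Rightarrow> 'a::{real_normed_vector, heine_borel}"
  assumes "filterlim (\<lambda>k. norm (xs k)) at_top sequentially"
  obtains r d where "strict_mono r" "norm d = 1" "(\<lambda>k. xs (r k) /\<^sub>R norm (xs (r k))) \<longlonglongrightarrow> d"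
proof -
  have "norm (x /\<^sub>R norm x) \<le> 1" for x :: 'a
    by (cases "x = 0") simp_all
  then have "bounded (range (\<lambda>k. xs k /\<^sub>R norm (xs k)))"
    by (auto simp: bounded_iff)
  then obtain d r where r: "strict_mono r" and lim: "(\<lambda>k. xs (r k) /\<^sub>R norm (xs (r k))) \<longlonglongrightarrow> d"
    using bounded_imp_convergent_subsequence unfolding comp_def by blast
  have "eventually (\<lambda>k. norm (xs k) \<ge> 1) sequentially"
    using assms by (simp add: filterlim_at_top)
  then have "eventually (\<lambda>k. xs k \<noteq> 0) sequentially"
    by (rule eventually_mono) auto
  then have "eventually (\<lambda>k. norm (xs (r k) /\<^sub>R norm (xs (r k))) = 1) sequentially"
    by (rule eventually_subseq[OF r, THEN eventually_mono]) simp
  then have "(\<lambda>k. 1) \<longlonglongrightarrow> norm d"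
    by (rule Lim_transform_eventually[OF tendsto_norm[OF lim]])
  then have "norm d = 1"
    by (simp add: LIMSEQ_const_iff)
  with r lim that show ?thesis
    by blast
qed

lemma normal_infty_convex_direction:
  fixes X :: "'a::{real_inner, heine_borel} set"
  assumes "convex X" "X \<noteq> {}" "u \<in> normal_infty X"
  obtains d where "d \<in> asymptotic_cone X" "norm d = 1" "u \<bullet> d \<ge> 0"
proof -
  obtain xs us where normals: "\<And>k. xs k \<in> X \<and> us k \<in> regular_normal X (xs k)"
    and norm_to_infty: "filterlim (\<lambda>k. norm (xs k)) at_top sequentially" and "us \<longlonglongrightarrow> u"
    using assms(3) unfolding normal_infty_def by blast
  obtain z where "z \<in> X"
    using assms(2) by blast
  obtain r d where r: "strict_mono r" and "norm d = 1"
    and direction: "(\<lambda>k. xs (r k) /\<^sub>R norm (xs (r k))) \<longlonglongrightarrow> d"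
    using unbounded_sequence_direction[OF norm_to_infty] by blast
  define t where "t k = norm (xs (r k))" for k
  have t_to_infty: "filterlim t at_top sequentially"
    unfolding t_def using filterlim_compose[OF norm_to_infty filterlim_subseq[OF r]] by (simp add: comp_def)
  have "d \<in> asymptotic_cone X"
    unfolding asymptotic_cone_def
    using t_to_infty normals direction by (intro CollectI exI[of _ t] exI[of _ "xs \<circ> r"]) (simp add: t_def)
  have "us (r k) \<bullet> z \<le> us (r k) \<bullet> xs (r k)" for k
    using regular_normal_convex_inner_nonpos[OF assms(1) _ \<open>z \<in> X\<close>] normals
    by (simp add: inner_diff_right)
  then have "us (r k) \<bullet> z * inverse (t k) \<le> us (r k) \<bullet> (xs (r k) /\<^sub>R t k)" for k
    using mult_left_mono[of _ _ "inverse (t k)"] by (simp add: t_def mult.commute[of "us (r k) \<bullet> z"])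
  moreover have "(\<lambda>k. us (r k) \<bullet> z * inverse (t k)) \<longlonglongrightarrow> u \<bullet> z * 0"
    using LIMSEQ_subseq_LIMSEQ[OF \<open>us \<longlonglongrightarrow> u\<close> r] tendsto_inverse_0_at_top[OF t_to_infty]
    by (intro tendsto_intros) (simp_all add: comp_def)
  moreover have "(\<lambda>k. us (r k) \<bullet> (xs (r k) /\<^sub>R t k)) \<longlonglongrightarrow> u \<bullet> d"
    using LIMSEQ_subseq_LIMSEQ[OF \<open>us \<longlonglongrightarrow> u\<close> r] direction
    by (intro tendsto_intros) (simp_all add: comp_def t_def)
  ultimately have "u \<bullet> z * 0 \<le> u \<bullet> d"
    by (intro LIMSEQ_le) auto
  with \<open>d \<in> asymptotic_cone X\<close> \<open>norm d = 1\<close> that show ?thesis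
    by simp
qed

theorem mainTheorem3:
  fixes X :: "'a::euclidean_space set" and c :: 'a and \<beta> :: real
  assumes "X \<noteq> {}" and "closed X" and "convex X" and "\<not> bounded X"
    and "\<exists>m. \<forall>x\<in>X. m \<le> c \<bullet> x + \<beta>"
    and "asymptotic_cone X \<inter> Kf (\<lambda>x. c \<bullet> x + \<beta>) = {0}"
  shows "0 \<notin> {a + b | a b. a \<in> subdiff_infty (\<lambda>x. c \<bullet> x + \<beta>) \<and> b \<in> normal_infty X}"
proof
  assume "0 \<in> {a + b | a b. a \<in> subdiff_infty (\<lambda>x. c \<bullet> x + \<beta>) \<and> b \<in> normal_infty X}"
  then obtain a b where "0 = a + b" "a \<in> subdiff_infty (\<lambda>x. c \<bullet> x + \<beta>)" "b \<in> normal_infty X"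
    by blast
  moreover have "a = c"
    using subdiff_infty_affine \<open>a \<in> subdiff_infty _\<close> by blast
  ultimately have "- c \<in> normal_infty X"
    by (metis add.commute eq_neg_iff_add_eq_0)
  then obtain d where d: "d \<in> asymptotic_cone X" "norm d = 1" "(- c) \<bullet> d \<ge> 0"
    using normal_infty_convex_direction[OF \<open>convex X\<close> \<open>X \<noteq> {}\<close>] by blast
  have "asymptotic_fun (\<lambda>x. c \<bullet> x + \<beta>) d \<le> 0"
    using asymptotic_fun_affine_le[of c \<beta> d] d(3) by (simp add: order_trans)
  then have "d \<in> asymptotic_cone X \<inter> Kf (\<lambda>x. c \<bullet> x + \<beta>)"
    using d(1) by (simp add: Kf_def)
  with assms(6) \<open>norm d = 1\<close> show False
    by auto
qed

end
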